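(* Fix $0<p<1$ and let $\Delta\ge \frac{-\ln\left(1-\sqrt[n]{p}\right)}{\lambda}$. Then in the $\mathrm{EDD}(\lambda)$ model with a global clock, the probability that a run of the protocol $\mathrm{CORE}(\Delta)$ is correct is at least $p$.
   Context: Agents $i_0,i_1,\ldots,i_n$ share an accurate global clock and are connected by a complete reliable network; the delay of each message is an independent exponential random variable with parameter $\lambda$. At time $0$ the supervisor $i_0$ receives an external input. Protocol $\mathrm{CORE}(\Delta)$: at time $0$, $i_0$ sends a "trigger" message to each of $i_1,\ldots,i_n$; upon receiving the trigger, agent $i_k$ waits until the global time is at least $\Delta$ and then performs its action $\alpha_k$ (acting immediately if the trigger arrives after time $\Delta$). Letting $t_k$ be the time at which $i_k$ performs $\alpha_k$, a run is correct if $t_1\le t_2\le\cdots\le t_n<\infty$. *)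

theory Defs
  imports "HOL-Probability.Probability"
begin

text \<open>Protocol CORE(Delta): the trigger to agent i_k is sent at time 0 and
arrives after delay d; agent i_k acts at the first time that is at least
Delta and at least the arrival time.\<close>
definition CORE_action_time :: "real \<Rightarrow> real \<Rightarrow> real" where
  "CORE_action_time \<Delta> d = max \<Delta> d"

text \<open>A run (given delays d 1, ..., d n) is correct if t_1 \<le> t_2 \<le> ... \<le> t_n;
all action times are finite real numbers, so the condition t_n < infinity holds
automatically.\<close>
definition CORE_correct :: "nat \<Rightarrow> real \<Rightarrow> (nat \<Rightarrow> real) \<Rightarrow> bool" where
  "CORE_correct n \<Delta> d \<longleftrightarrow>
     (\<forall>k\<in>{1..<n}. CORE_action_time \<Delta> (d k) \<le> CORE_action_time \<Delta> (d (Suc k)))"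

end

theory Submission
  imports Defs
begin

text \<open>If every trigger arrives by time \<open>\<Delta>\<close>, all agents act exactly at time \<open>\<Delta>\<close> and the run is
correct. The arrival events are independent, each of probability \<open>1 - exp (- \<Delta> l)\<close>, so the
run is correct with probability at least \<open>(1 - exp (- \<Delta> l)) ^ n\<close>; the bound on \<open>\<Delta>\<close> says
precisely that \<open>\<Delta>\<close> is at least the \<open>root n p\<close>-quantile of the exponential distribution,
which makes this at least \<open>p\<close>.\<close>

lemma CORE_correct_if_arrivals_le:
  assumes "\<And>k. k \<in> {1..n} \<Longrightarrow> d k \<le> \<Delta>"
  shows "CORE_correct n \<Delta> d"
  using assms by (auto simp: CORE_correct_def CORE_action_time_def)

lemma CORE_correct_measurable:
  assumes "\<And>k. k \<in> {1..n} \<Longrightarrow> D k \<in> borel_measurable M"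
  shows "{\<omega> \<in> space M. CORE_correct n \<Delta> (\<lambda>k. D k \<omega>)} \<in> sets M"
proof -
  have "{\<omega> \<in> space M. CORE_correct n \<Delta> (\<lambda>k. D k \<omega>)}
      = {\<omega> \<in> space M. \<forall>k\<in>{1..<n}. max \<Delta> (D k \<omega>) \<le> max \<Delta> (D (Suc k) \<omega>)}"
    by (simp add: CORE_correct_def CORE_action_time_def)
  also have "\<dots> \<in> sets M"
  proof (rule sets.sets_Collect_finite_All)
    fix k assume "k \<in> {1..<n}"
    then have "D k \<in> borel_measurable M" "D (Suc k) \<in> borel_measurable M"
      using assms by auto
    then show "{\<omega> \<in> space M. max \<Delta> (D k \<omega>) \<le> max \<Delta> (D (Suc k) \<omega>)} \<in> sets M"
      by measurable
  qed simp
  finally show ?thesis .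
qed

lemma exponential_quantile_le:
  fixes l r t :: real
  assumes "0 < l" "0 < r" "r < 1" "- ln (1 - r) / l \<le> t"
  shows "0 \<le> t" and "r \<le> 1 - exp (- t * l)"
proof -
  have "- ln (1 - r) \<le> t * l"
    using assms(1,4) by (metis minus_divide_left pos_divide_le_eq)
  moreover have "0 < - ln (1 - r)"
    using assms(2,3) by simp
  ultimately have "0 < t * l"
    by linarith
  then show "0 \<le> t"
    using assms(1) by (simp add: zero_less_mult_iff)
  have "exp (- t * l) \<le> exp (ln (1 - r))"
    using \<open>- ln (1 - r) \<le> t * l\<close> by simp
  then show "r \<le> 1 - exp (- t * l)"
    using assms(3) by simp
qed

context prob_space
begin

lemma prob_indep_exponentials_le:
  assumes indep: "indep_vars (\<lambda>_. borel) X I" and "finite I" and "0 < l" and "0 \<le> t"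
    and exponential: "\<And>i. i \<in> I \<Longrightarrow> distributed M lborel (X i) (exponential_density l)"
  shows "prob {\<omega> \<in> space M. \<forall>i\<in>I. X i \<omega> \<le> t} = (1 - exp (- t * l)) ^ card I"
proof (cases "I = {}")
  case True
  then show ?thesis by (simp add: prob_space)
next
  case False
  define A where "A i = {\<omega> \<in> space M. X i \<omega> \<le> t}" for i
  have "indep_events A I"
    unfolding A_def by (rule indep_eventsI_indep_vars[OF indep]) auto
  have "{\<omega> \<in> space M. \<forall>i\<in>I. X i \<omega> \<le> t} = (\<Inter>i\<in>I. A i)"
    using False by (auto simp: A_def)
  then have "prob {\<omega> \<in> space M. \<forall>i\<in>I. X i \<omega> \<le> t} = (\<Prod>i\<in>I. prob (A i))"
    using \<open>indep_events A I\<close> False \<open>finite I\<close> unfolding indep_events_def by auto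
  also have "\<dots> = (\<Prod>i\<in>I. 1 - exp (- t * l))"
    unfolding A_def using exponential_distributedD_le[OF exponential \<open>0 \<le> t\<close> \<open>0 < l\<close>] by simp
  finally show ?thesis
    by simp
qed

lemma prob_CORE_correct_ge:
  assumes indep: "indep_vars (\<lambda>_. borel) D {1..n}" and "0 < l" and "0 \<le> \<Delta>"
    and exponential: "\<And>k. k \<in> {1..n} \<Longrightarrow> distributed M lborel (D k) (exponential_density l)"
  shows "(1 - exp (- \<Delta> * l)) ^ n \<le> prob {\<omega> \<in> space M. CORE_correct n \<Delta> (\<lambda>k. D k \<omega>)}"
proof -
  have "(1 - exp (- \<Delta> * l)) ^ n = prob {\<omega> \<in> space M. \<forall>k\<in>{1..n}. D k \<omega> \<le> \<Delta>}"
    using prob_indep_exponentials_le[OF indep _ \<open>0 < l\<close> \<open>0 \<le> \<Delta>\<close> exponential] by simp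
  also have "\<dots> \<le> prob {\<omega> \<in> space M. CORE_correct n \<Delta> (\<lambda>k. D k \<omega>)}"
  proof (rule finite_measure_mono)
    show "{\<omega> \<in> space M. \<forall>k\<in>{1..n}. D k \<omega> \<le> \<Delta>}
        \<subseteq> {\<omega> \<in> space M. CORE_correct n \<Delta> (\<lambda>k. D k \<omega>)}"
      by (auto intro: CORE_correct_if_arrivals_le)
    show "{\<omega> \<in> space M. CORE_correct n \<Delta> (\<lambda>k. D k \<omega>)} \<in> events"
      using indep by (intro CORE_correct_measurable) (auto simp: indep_vars_def)
  qed
  finally show ?thesis .
qed

end

theorem corollary2:
  fixes M :: "'a measure" and D :: "nat \<Rightarrow> 'a \<Rightarrow> real"
    and n :: nat and l p \<Delta> :: real
  assumes "prob_space M"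
    and "n \<ge> 1"
    and "0 < l"
    and "0 < p" and "p < 1"
    and "\<Delta> \<ge> - ln (1 - root n p) / l"
    and "prob_space.indep_vars M (\<lambda>_. borel) D {1..n}"
    and "\<And>k. k \<in> {1..n} \<Longrightarrow> distributed M lborel (D k) (exponential_density l)"
  shows "prob_space.prob M {\<omega> \<in> space M. CORE_correct n \<Delta> (\<lambda>k. D k \<omega>)} \<ge> p"
proof -
  interpret prob_space M by fact
  define r where "r = root n p"
  have "0 < r" "r < 1" "r ^ n = p"
    using assms(2,4,5) by (auto simp: r_def real_root_lt_1_iff)
  then have "0 \<le> \<Delta>" and "r \<le> 1 - exp (- \<Delta> * l)"
    using exponential_quantile_le[OF \<open>0 < l\<close>] assms(6) unfolding r_def by blast+
  then have "p \<le> (1 - exp (- \<Delta> * l)) ^ n"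
    using \<open>0 < r\<close> \<open>r ^ n = p\<close> by (metis less_imp_le power_mono)
  also have "\<dots> \<le> prob {\<omega> \<in> space M. CORE_correct n \<Delta> (\<lambda>k. D k \<omega>)}"
    using prob_CORE_correct_ge[OF assms(7,3) \<open>0 \<le> \<Delta>\<close> assms(8)] .
  finally show ?thesis .
qed

end
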